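(* Let $\Bbbk$ be a field of characteristic zero, $S=\Bbbk[x_1,x_2,x_3,x_4]$, $d\geq 2$, and $I=(x_1^d,x_2^d,x_3^d,x_4^d,x_1^{d-1}x_2,x_{3}^{d-1}x_4)$. Then $S/I$ fails the WLP in degree $2d-3$.
   Context: For a monomial ideal $I$, $A=S/I$ fails the WLP in degree $i$ if $\times(x_1+\cdots+x_4): A_i\to A_{i+1}$ is neither injective nor surjective. *)

theory Defs
  imports "HOL-Library.Poly_Mapping"
begin

text \<open>The paper's variables x_1,...,x_4 are x_0,...,x_3 here.\<close>

type_synonym 'a mpoly = "(nat \<Rightarrow>\<^sub>0 nat) \<Rightarrow>\<^sub>0 'a"

definition var :: "nat \<Rightarrow> 'a::comm_ring_1 mpoly" where
  "var j = Poly_Mapping.single (Poly_Mapping.single j 1) 1"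

definition S4 :: "'a::comm_ring_1 mpoly set" where
  "S4 = {p :: 'a mpoly. \<forall>m \<in> Poly_Mapping.keys p. \<forall>j \<in> Poly_Mapping.keys m. j < (4::nat)}"

definition mdeg :: "(nat \<Rightarrow>\<^sub>0 nat) \<Rightarrow> nat" where
  "mdeg m = (\<Sum>j\<in>Poly_Mapping.keys m. Poly_Mapping.lookup m j)"

definition S4_deg :: "nat \<Rightarrow> 'a::comm_ring_1 mpoly set" where
  "S4_deg i = {p \<in> S4. \<forall>m \<in> Poly_Mapping.keys p. mdeg m = i}"

definition ideal_gen :: "'a::comm_ring_1 mpoly set \<Rightarrow> 'a mpoly set" where
  "ideal_gen G = {(\<Sum>g\<in>G. h g * g) | h. \<forall>g\<in>G. h g \<in> S4}"

definition lin_form :: "'a::comm_ring_1 mpoly" where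
  "lin_form = var 0 + var 1 + var 2 + var 3"

text \<open>Multiplication by x_1+...+x_4 from A_i to A_{i+1}, where A = S/I and
  A_i = S_i / (I \<inter> S_i).  Injectivity / surjectivity of the induced map:\<close>
definition wlp_inj :: "'a::comm_ring_1 mpoly set \<Rightarrow> nat \<Rightarrow> bool" where
  "wlp_inj I i \<longleftrightarrow> (\<forall>f \<in> S4_deg i. lin_form * f \<in> I \<longrightarrow> f \<in> I)"

definition wlp_surj :: "'a::comm_ring_1 mpoly set \<Rightarrow> nat \<Rightarrow> bool" where
  "wlp_surj I i \<longleftrightarrow> (\<forall>g \<in> S4_deg (Suc i). \<exists>f \<in> S4_deg i. g - lin_form * f \<in> I)"

definition fails_WLP_in_degree :: "'a::comm_ring_1 mpoly set \<Rightarrow> nat \<Rightarrow> bool" where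
  "fails_WLP_in_degree I i \<longleftrightarrow> \<not> wlp_inj I i \<and> \<not> wlp_surj I i"

end

theory Submission
  imports Defs
begin

text \<open>Write L = x_0 + x_1, L' = x_2 + x_3 and n = 2d - 3. Every monomial of degree 2d - 2 in
  x_0, x_1 alone, or in x_2, x_3 alone, lies in I; hence (L + L') f = L^(n+1) - (-L')^(n+1) lies
  in I for f = sum_k L^k (-L')^(n-k). Both failures are detected by the linear functionals
  p \<mapsto> coefficient of s^A t^B in p(s, \<sigma>s, t, \<sigma>t) with A, B < d, which vanish on I because
  no monomial of bidegree (A, B) is divisible by a generator. For \<sigma> = 1 and
  (A, B) = (d - 1, d - 2) the functional takes the value 2^(d-1) (-2)^(d-2) \<noteq> 0 on f, so f is
  not in I. For \<sigma> = -1 and A = B = d - 1 it kills every multiple of L + L' but equals 1 on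
  x_0^(d-1) x_2^(d-1), which is therefore not in the image.\<close>

definition coeff_sum :: "((nat \<Rightarrow>\<^sub>0 nat) \<Rightarrow> 'a::comm_ring_1) \<Rightarrow> 'a mpoly \<Rightarrow> 'a" where
  "coeff_sum w p = (\<Sum>m\<in>Poly_Mapping.keys p. Poly_Mapping.lookup p m * w m)"

lemma coeff_sum_zero [simp]: "coeff_sum w 0 = 0"
  by (simp add: coeff_sum_def)

lemma coeff_sum_add: "coeff_sum w (p + q) = coeff_sum w p + coeff_sum w q"
  unfolding coeff_sum_def by (rule setsum_keys_plus_distrib) (auto simp: algebra_simps)

lemma coeff_sum_uminus: "coeff_sum w (- p) = - coeff_sum w p"
  by (simp add: coeff_sum_def sum_negf)

lemma coeff_sum_diff: "coeff_sum w (p - q) = coeff_sum w p - coeff_sum w q"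
  using coeff_sum_add[of w p "- q"] by (simp add: coeff_sum_uminus)

lemma coeff_sum_sum: "coeff_sum w (sum f A) = (\<Sum>a\<in>A. coeff_sum w (f a))"
  by (induction A rule: infinite_finite_induct) (simp_all add: coeff_sum_add)

lemma coeff_sum_single: "coeff_sum w (Poly_Mapping.single m c) = c * w m"
  by (simp add: coeff_sum_def)

lemma coeff_sum_one: "coeff_sum w 1 = w 0"
  using coeff_sum_single[of w 0 1] by simp

lemma coeff_sum_eq_0: "(\<And>m. m \<in> Poly_Mapping.keys p \<Longrightarrow> w m = 0) \<Longrightarrow> coeff_sum w p = 0"
  by (simp add: coeff_sum_def)

lemma coeff_sum_zero_weight [simp]: "coeff_sum (\<lambda>_. 0) p = 0"
  by (simp add: coeff_sum_def)

lemma coeff_sum_weight_add: "coeff_sum (\<lambda>m. v m + w m) p = coeff_sum v p + coeff_sum w p"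
  by (simp add: coeff_sum_def sum.distrib algebra_simps)

lemma coeff_sum_weight_scale: "coeff_sum (\<lambda>m. c * w m) p = c * coeff_sum w p"
  by (simp add: coeff_sum_def sum_distrib_left algebra_simps)

lemma sum_single_lookup:
  "(\<Sum>m\<in>Poly_Mapping.keys p. Poly_Mapping.single m (Poly_Mapping.lookup p m)) = p"
  by (rule poly_mapping_eqI) (simp add: lookup_sum lookup_single when_def in_keys_iff)

lemma coeff_sum_single_mult:
  "coeff_sum w (Poly_Mapping.single e c * p) = c * coeff_sum (\<lambda>m. w (e + m)) p"
proof -
  have "Poly_Mapping.single e c * p =
      (\<Sum>m\<in>Poly_Mapping.keys p. Poly_Mapping.single (e + m) (c * Poly_Mapping.lookup p m))"
    by (subst sum_single_lookup[of p, symmetric]) (simp add: sum_distrib_left mult_single)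
  then have "coeff_sum w (Poly_Mapping.single e c * p) =
      (\<Sum>m\<in>Poly_Mapping.keys p. c * Poly_Mapping.lookup p m * w (e + m))"
    by (simp only: coeff_sum_sum coeff_sum_single)
  then show ?thesis
    by (simp add: coeff_sum_def sum_distrib_left algebra_simps)
qed

lemma var_power: "(var j :: 'a::comm_ring_1 mpoly) ^ k = Poly_Mapping.single (Poly_Mapping.single j k) 1"
  by (induction k) (simp_all add: var_def mult_single single_add[symmetric])

lemma S4_single: "(\<And>j. j \<in> Poly_Mapping.keys m \<Longrightarrow> j < 4) \<Longrightarrow> Poly_Mapping.single m c \<in> S4"
  by (simp add: S4_def)

lemma S4_deg_zero: "0 \<in> S4_deg n"
  by (simp add: S4_deg_def S4_def)

lemma S4_deg_add: "p \<in> S4_deg n \<Longrightarrow> q \<in> S4_deg n \<Longrightarrow> p + q \<in> S4_deg n"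
  unfolding S4_deg_def S4_def by (auto dest!: subsetD[OF keys_add])

lemma S4_deg_sum: "(\<And>a. a \<in> A \<Longrightarrow> f a \<in> S4_deg n) \<Longrightarrow> sum f A \<in> S4_deg n"
  by (induction A rule: infinite_finite_induct) (simp_all add: S4_deg_zero S4_deg_add)

lemma ideal_genI: "p = (\<Sum>g\<in>G. h g * g) \<Longrightarrow> (\<And>g. g \<in> G \<Longrightarrow> h g \<in> S4) \<Longrightarrow> p \<in> ideal_gen G"
  unfolding ideal_gen_def by blast

lemma ideal_gen_zero: "0 \<in> ideal_gen G"
  unfolding ideal_gen_def S4_def by (auto intro!: exI[of _ "\<lambda>_. 0"])

lemma ideal_gen_add: "p \<in> ideal_gen G \<Longrightarrow> q \<in> ideal_gen G \<Longrightarrow> p + q \<in> ideal_gen G"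
proof -
  assume "p \<in> ideal_gen G" "q \<in> ideal_gen G"
  then obtain h h' where "p = (\<Sum>g\<in>G. h g * g)" "q = (\<Sum>g\<in>G. h' g * g)"
    and "\<forall>g\<in>G. h g \<in> S4" "\<forall>g\<in>G. h' g \<in> S4"
    unfolding ideal_gen_def by auto
  then have "p + q = (\<Sum>g\<in>G. (h g + h' g) * g)" "\<And>g. g \<in> G \<Longrightarrow> h g + h' g \<in> S4"
    unfolding S4_def by (auto simp: sum.distrib distrib_right dest!: subsetD[OF keys_add])
  then show ?thesis
    by (rule ideal_genI)
qed

lemma ideal_gen_uminus: "p \<in> ideal_gen G \<Longrightarrow> - p \<in> ideal_gen G"
proof -
  assume "p \<in> ideal_gen G"
  then obtain h where "p = (\<Sum>g\<in>G. h g * g)" "\<forall>g\<in>G. h g \<in> S4"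
    unfolding ideal_gen_def by auto
  then have "- p = (\<Sum>g\<in>G. (- h g) * g)" "\<And>g. g \<in> G \<Longrightarrow> - h g \<in> S4"
    unfolding S4_def by (auto simp: sum_negf)
  then show ?thesis
    by (rule ideal_genI)
qed

lemma ideal_gen_diff: "p \<in> ideal_gen G \<Longrightarrow> q \<in> ideal_gen G \<Longrightarrow> p - q \<in> ideal_gen G"
  using ideal_gen_add[of p G "- q"] ideal_gen_uminus[of q G] by simp

lemma ideal_gen_sum: "(\<And>a. a \<in> A \<Longrightarrow> f a \<in> ideal_gen G) \<Longrightarrow> sum f A \<in> ideal_gen G"
  by (induction A rule: infinite_finite_induct) (simp_all add: ideal_gen_zero ideal_gen_add)

lemma ideal_gen_mult_generator:
  assumes "finite G" "g \<in> G" "q \<in> S4"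
  shows "q * g \<in> ideal_gen G"
proof -
  let ?h = "\<lambda>g'. if g' = g then q else 0"
  have "(\<Sum>g'\<in>G. ?h g' * g') = (\<Sum>g'\<in>G. if g' = g then q * g else 0)"
    by (rule sum.cong) auto
  then have "q * g = (\<Sum>g'\<in>G. ?h g' * g')"
    using assms(1,2) by simp
  moreover have "\<And>g'. g' \<in> G \<Longrightarrow> ?h g' \<in> S4"
    using assms(3) by (simp add: S4_def)
  ultimately show ?thesis
    by (rule ideal_genI)
qed

definition monom_dvd :: "(nat \<Rightarrow>\<^sub>0 nat) \<Rightarrow> (nat \<Rightarrow>\<^sub>0 nat) \<Rightarrow> bool" where
  "monom_dvd a m \<longleftrightarrow> (\<forall>j. Poly_Mapping.lookup a j \<le> Poly_Mapping.lookup m j)"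

lemma monom_dvd_single: "monom_dvd (Poly_Mapping.single i k) m \<longleftrightarrow> k \<le> Poly_Mapping.lookup m i"
  by (auto simp: monom_dvd_def lookup_single when_def)

lemma monom_dvd_single_add_single:
  "i \<noteq> j \<Longrightarrow> monom_dvd (Poly_Mapping.single i k + Poly_Mapping.single j l) m \<longleftrightarrow>
     k \<le> Poly_Mapping.lookup m i \<and> l \<le> Poly_Mapping.lookup m j"
  by (auto simp: monom_dvd_def lookup_add lookup_single when_def)

abbreviation monomial_ideal :: "(nat \<Rightarrow>\<^sub>0 nat) set \<Rightarrow> 'a::comm_ring_1 mpoly set" where
  "monomial_ideal M \<equiv> ideal_gen ((\<lambda>a. Poly_Mapping.single a 1) ` M)"

lemma keys_monomial_ideal:
  assumes "p \<in> monomial_ideal M" "m \<in> Poly_Mapping.keys p"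
  shows "\<exists>a\<in>M. monom_dvd a m"
proof -
  obtain h where "p = (\<Sum>g\<in>(\<lambda>a. Poly_Mapping.single a 1) ` M. h g * g)"
    using assms(1) unfolding ideal_gen_def by auto
  then have "m \<in> Poly_Mapping.keys (\<Sum>g\<in>(\<lambda>a. Poly_Mapping.single a 1) ` M. h g * g)"
    using assms(2) by simp
  then have "m \<in> (\<Union>g\<in>(\<lambda>a. Poly_Mapping.single a 1) ` M. Poly_Mapping.keys (h g * g))"
    by (rule subsetD[OF keys_sum])
  then obtain a where a: "a \<in> M" "m \<in> Poly_Mapping.keys (h (Poly_Mapping.single a 1) * Poly_Mapping.single a 1)"
    by blast
  then obtain b where "m = b + a"
    using keys_mult[of "h (Poly_Mapping.single a 1)" "Poly_Mapping.single a 1"] by auto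
  then show ?thesis
    using a(1) by (auto simp: monom_dvd_def lookup_add intro!: bexI[of _ a])
qed

lemma monomial_idealI:
  assumes "finite M" "p \<in> S4" "\<And>m. m \<in> Poly_Mapping.keys p \<Longrightarrow> \<exists>a\<in>M. monom_dvd a m"
  shows "p \<in> monomial_ideal M"
proof -
  have "Poly_Mapping.single m (Poly_Mapping.lookup p m) \<in> monomial_ideal M"
    if m: "m \<in> Poly_Mapping.keys p" for m
  proof -
    obtain a where a: "a \<in> M" "monom_dvd a m"
      using assms(3) m by blast
    have "Poly_Mapping.single (m - a) (Poly_Mapping.lookup p m) \<in> S4"
      using assms(2) m by (intro S4_single) (auto simp: S4_def in_keys_iff lookup_minus)
    then have "Poly_Mapping.single (m - a) (Poly_Mapping.lookup p m) * Poly_Mapping.single a 1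
        \<in> monomial_ideal M"
      using assms(1) a(1) by (intro ideal_gen_mult_generator) auto
    moreover have "m - a + a = m"
      using a(2) by (intro poly_mapping_eqI) (simp add: monom_dvd_def lookup_add lookup_minus)
    ultimately show ?thesis
      by (simp add: mult_single)
  qed
  then have "(\<Sum>m\<in>Poly_Mapping.keys p. Poly_Mapping.single m (Poly_Mapping.lookup p m)) \<in> monomial_ideal M"
    by (rule ideal_gen_sum)
  then show ?thesis
    by (simp only: sum_single_lookup)
qed

lemma coeff_sum_monomial_ideal:
  assumes "p \<in> monomial_ideal M" "\<And>m. w m \<noteq> 0 \<Longrightarrow> \<not> (\<exists>a\<in>M. monom_dvd a m)"
  shows "coeff_sum w p = 0"
  by (rule coeff_sum_eq_0) (use assms keys_monomial_ideal in blast)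

definition gen_exponents :: "nat \<Rightarrow> (nat \<Rightarrow>\<^sub>0 nat) set" where
  "gen_exponents d =
     {Poly_Mapping.single 0 d, Poly_Mapping.single 1 d, Poly_Mapping.single 2 d, Poly_Mapping.single 3 d,
      Poly_Mapping.single 0 (d - 1) + Poly_Mapping.single 1 1,
      Poly_Mapping.single 2 (d - 1) + Poly_Mapping.single 3 1}"

lemma generators_eq_monomials:
  "{var 0 ^ d, var 1 ^ d, var 2 ^ d, var 3 ^ d, var 0 ^ (d - 1) * var 1, var 2 ^ (d - 1) * var 3} =
     ((\<lambda>a. Poly_Mapping.single a 1) ` gen_exponents d :: 'a::comm_ring_1 mpoly set)"
  by (simp only: var_power) (simp add: gen_exponents_def var_def mult_single)

lemma monom_dvd_gen_exponents_iff:
  "(\<exists>a\<in>gen_exponents d. monom_dvd a m) \<longleftrightarrow>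
     d \<le> Poly_Mapping.lookup m 0 \<or> d \<le> Poly_Mapping.lookup m 1 \<or>
     d \<le> Poly_Mapping.lookup m 2 \<or> d \<le> Poly_Mapping.lookup m 3 \<or>
     d - 1 \<le> Poly_Mapping.lookup m 0 \<and> 1 \<le> Poly_Mapping.lookup m 1 \<or>
     d - 1 \<le> Poly_Mapping.lookup m 2 \<and> 1 \<le> Poly_Mapping.lookup m 3"
  by (simp add: gen_exponents_def monom_dvd_single monom_dvd_single_add_single)

definition bihomogeneous :: "nat \<Rightarrow> nat \<Rightarrow> 'a::comm_ring_1 mpoly \<Rightarrow> bool" where
  "bihomogeneous A B p \<longleftrightarrow> (\<forall>m\<in>Poly_Mapping.keys p. (\<forall>j\<in>Poly_Mapping.keys m. j < 4) \<and>
     Poly_Mapping.lookup m 0 + Poly_Mapping.lookup m 1 = A \<and>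
     Poly_Mapping.lookup m 2 + Poly_Mapping.lookup m 3 = B)"

lemma bihomogeneous_add: "bihomogeneous A B p \<Longrightarrow> bihomogeneous A B q \<Longrightarrow> bihomogeneous A B (p + q)"
  unfolding bihomogeneous_def by (auto dest!: subsetD[OF keys_add])

lemma bihomogeneous_uminus: "bihomogeneous A B p \<Longrightarrow> bihomogeneous A B (- p)"
  unfolding bihomogeneous_def by simp

lemma bihomogeneous_one: "bihomogeneous 0 0 1"
  unfolding bihomogeneous_def by simp

lemma bihomogeneous_mult:
  assumes "bihomogeneous A B p" "bihomogeneous A' B' q"
  shows "bihomogeneous (A + A') (B + B') (p * q)"
  unfolding bihomogeneous_def
proof
  fix m
  assume "m \<in> Poly_Mapping.keys (p * q)"
  then obtain a b where "m = a + b" "a \<in> Poly_Mapping.keys p" "b \<in> Poly_Mapping.keys q"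
    using keys_mult by blast
  then show "(\<forall>j\<in>Poly_Mapping.keys m. j < 4) \<and>
      Poly_Mapping.lookup m 0 + Poly_Mapping.lookup m 1 = A + A' \<and>
      Poly_Mapping.lookup m 2 + Poly_Mapping.lookup m 3 = B + B'"
    using assms keys_add[of a b] unfolding bihomogeneous_def by (auto simp: lookup_add)
qed

lemma bihomogeneous_power: "bihomogeneous A B p \<Longrightarrow> bihomogeneous (k * A) (k * B) (p ^ k)"
  by (induction k) (simp_all add: bihomogeneous_one bihomogeneous_mult)

lemma bihomogeneous_var01: "j \<in> {0, 1} \<Longrightarrow> bihomogeneous 1 0 (var j)"
  by (auto simp: bihomogeneous_def var_def lookup_single when_def)

lemma bihomogeneous_var23: "j \<in> {2, 3} \<Longrightarrow> bihomogeneous 0 1 (var j)"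
  by (auto simp: bihomogeneous_def var_def lookup_single when_def)

lemma mdeg_eq_sum4:
  assumes "\<forall>j\<in>Poly_Mapping.keys m. j < 4"
  shows "mdeg m = Poly_Mapping.lookup m 0 + Poly_Mapping.lookup m 1 +
    Poly_Mapping.lookup m 2 + Poly_Mapping.lookup m 3"
proof -
  have "mdeg m = (\<Sum>j\<in>{0, 1, 2, 3}. Poly_Mapping.lookup m j)"
    unfolding mdeg_def by (rule sum.mono_neutral_left) (use assms in \<open>auto simp: in_keys_iff\<close>)
  then show ?thesis
    by simp
qed

lemma bihomogeneous_S4: "bihomogeneous A B p \<Longrightarrow> p \<in> S4"
  unfolding bihomogeneous_def S4_def by blast

lemma bihomogeneous_S4_deg: "bihomogeneous A B p \<Longrightarrow> p \<in> S4_deg (A + B)"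
  using bihomogeneous_S4[of A B p] mdeg_eq_sum4
  unfolding S4_deg_def bihomogeneous_def by fastforce

lemma bihomogeneous_in_ideal:
  assumes "d \<ge> 2" "bihomogeneous A B p" "2 * d - 2 \<le> A \<or> 2 * d - 2 \<le> B"
  shows "p \<in> monomial_ideal (gen_exponents d)"
proof (rule monomial_idealI)
  show "finite (gen_exponents d)"
    by (simp add: gen_exponents_def)
  show "p \<in> S4"
    using assms(2) by (rule bihomogeneous_S4)
  fix m
  assume "m \<in> Poly_Mapping.keys p"
  then have "Poly_Mapping.lookup m 0 + Poly_Mapping.lookup m 1 = A"
    "Poly_Mapping.lookup m 2 + Poly_Mapping.lookup m 3 = B"
    using assms(2) unfolding bihomogeneous_def by auto
  then show "\<exists>a\<in>gen_exponents d. monom_dvd a m"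
    unfolding monom_dvd_gen_exponents_iff using assms(1,3) by arith
qed

text \<open>For p in S, coeff_sum (bidegree_weight \<sigma> A B) p is the coefficient of s^A t^B in
  p(s, \<sigma>s, t, \<sigma>t).\<close>

definition bidegree_weight :: "'a::comm_ring_1 \<Rightarrow> nat \<Rightarrow> nat \<Rightarrow> (nat \<Rightarrow>\<^sub>0 nat) \<Rightarrow> 'a" where
  "bidegree_weight \<sigma> A B m =
     (if Poly_Mapping.lookup m 0 + Poly_Mapping.lookup m 1 = A \<and>
         Poly_Mapping.lookup m 2 + Poly_Mapping.lookup m 3 = B
      then \<sigma> ^ (Poly_Mapping.lookup m 1 + Poly_Mapping.lookup m 3) else 0)"

lemma coeff_sum_bidegree_weight_one: "coeff_sum (bidegree_weight \<sigma> 0 0) 1 = 1"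
  by (simp add: coeff_sum_one bidegree_weight_def)

lemma coeff_sum_bidegree_weight_ideal:
  assumes "p \<in> monomial_ideal (gen_exponents d)" "A < d" "B < d"
  shows "coeff_sum (bidegree_weight \<sigma> A B) p = 0"
  by (rule coeff_sum_monomial_ideal[OF assms(1)])
    (use assms(2,3) in \<open>auto simp: bidegree_weight_def monom_dvd_gen_exponents_iff split: if_splits\<close>)

lemma coeff_sum_bidegree_weight_mult_x01:
  "coeff_sum (bidegree_weight \<sigma> A B) ((var 0 + var 1) * q) =
     (if A = 0 then 0 else (1 + \<sigma>) * coeff_sum (bidegree_weight \<sigma> (A - 1) B) q)"
proof -
  have "coeff_sum (bidegree_weight \<sigma> A B) ((var 0 + var 1) * q) =
      coeff_sum (\<lambda>m. bidegree_weight \<sigma> A B (Poly_Mapping.single 0 1 + m) +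
        bidegree_weight \<sigma> A B (Poly_Mapping.single 1 1 + m)) q"
    by (simp add: var_def distrib_right coeff_sum_add coeff_sum_single_mult coeff_sum_weight_add)
  also have "(\<lambda>m. bidegree_weight \<sigma> A B (Poly_Mapping.single 0 1 + m) +
        bidegree_weight \<sigma> A B (Poly_Mapping.single 1 1 + m)) =
      (\<lambda>m. if A = 0 then 0 else (1 + \<sigma>) * bidegree_weight \<sigma> (A - 1) B m)"
    by (auto simp: fun_eq_iff bidegree_weight_def lookup_add lookup_single algebra_simps)
  finally show ?thesis
    by (cases "A = 0") (simp_all add: coeff_sum_weight_scale)
qed

lemma coeff_sum_bidegree_weight_mult_x23:
  "coeff_sum (bidegree_weight \<sigma> A B) ((var 2 + var 3) * q) =
     (if B = 0 then 0 else (1 + \<sigma>) * coeff_sum (bidegree_weight \<sigma> A (B - 1)) q)"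
proof -
  have "coeff_sum (bidegree_weight \<sigma> A B) ((var 2 + var 3) * q) =
      coeff_sum (\<lambda>m. bidegree_weight \<sigma> A B (Poly_Mapping.single 2 1 + m) +
        bidegree_weight \<sigma> A B (Poly_Mapping.single 3 1 + m)) q"
    by (simp add: var_def distrib_right coeff_sum_add coeff_sum_single_mult coeff_sum_weight_add)
  also have "(\<lambda>m. bidegree_weight \<sigma> A B (Poly_Mapping.single 2 1 + m) +
        bidegree_weight \<sigma> A B (Poly_Mapping.single 3 1 + m)) =
      (\<lambda>m. if B = 0 then 0 else (1 + \<sigma>) * bidegree_weight \<sigma> A (B - 1) m)"
    by (auto simp: fun_eq_iff bidegree_weight_def lookup_add lookup_single algebra_simps)
  finally show ?thesis
    by (cases "B = 0") (simp_all add: coeff_sum_weight_scale)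
qed

lemma lowering_power:
  fixes F :: "nat \<Rightarrow> 'b::monoid_mult \<Rightarrow> 'a::comm_semiring_1"
  assumes lower: "\<And>A q. F A (P * q) = (if A = 0 then 0 else c * F (A - 1) q)"
  shows "F A (P ^ k * q) = (if k \<le> A then c ^ k * F (A - k) q else 0)"
proof (induction k arbitrary: A)
  case 0
  show ?case by simp
next
  case (Suc k)
  have "F A (P ^ Suc k * q) = F A (P * (P ^ k * q))"
    by (simp add: mult.assoc)
  then show ?case
    using Suc.IH[of "A - 1"] lower by (cases A) (auto simp: mult.assoc)
qed

lemma coeff_sum_bidegree_weight_power_x01:
  "coeff_sum (bidegree_weight \<sigma> A B) ((var 0 + var 1) ^ k * q) =
     (if k \<le> A then (1 + \<sigma>) ^ k * coeff_sum (bidegree_weight \<sigma> (A - k) B) q else 0)"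
  by (rule lowering_power[where F = "\<lambda>A. coeff_sum (bidegree_weight \<sigma> A B)"])
    (rule coeff_sum_bidegree_weight_mult_x01)

lemma coeff_sum_bidegree_weight_power_neg_x23:
  "coeff_sum (bidegree_weight \<sigma> A B) ((- (var 2 + var 3)) ^ k * q) =
     (if k \<le> B then (- (1 + \<sigma>)) ^ k * coeff_sum (bidegree_weight \<sigma> A (B - k)) q else 0)"
  by (rule lowering_power[where F = "\<lambda>B. coeff_sum (bidegree_weight \<sigma> A B)"])
    (simp only: mult_minus_left coeff_sum_uminus coeff_sum_bidegree_weight_mult_x23, simp)

lemma lin_form_eq: "lin_form = (var 0 + var 1) + (var 2 + var 3)"
  by (simp add: lin_form_def add.assoc)

lemma coeff_sum_bidegree_weight_geometric_sum:
  assumes "A + B = n"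
  shows "coeff_sum (bidegree_weight (1 :: 'a::comm_ring_1) A B)
      (\<Sum>k<Suc n. (var 0 + var 1) ^ k * (- (var 2 + var 3)) ^ (n - k)) = 2 ^ A * (- 2) ^ B"
proof -
  have "coeff_sum (bidegree_weight (1 :: 'a) A B) ((var 0 + var 1) ^ k * ((- (var 2 + var 3)) ^ (n - k) * 1)) =
      (if k = A then 2 ^ A * (- 2) ^ B else 0)" for k
    by (simp only: coeff_sum_bidegree_weight_power_x01 coeff_sum_bidegree_weight_power_neg_x23)
      (use assms in \<open>auto simp: coeff_sum_bidegree_weight_one\<close>)
  then have "coeff_sum (bidegree_weight (1 :: 'a) A B)
      (\<Sum>k<Suc n. (var 0 + var 1) ^ k * (- (var 2 + var 3)) ^ (n - k)) =
      (\<Sum>k<Suc n. if k = A then 2 ^ A * (- 2) ^ B else 0)"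
    by (simp only: coeff_sum_sum mult_1_right)
  also have "\<dots> = 2 ^ A * (- 2) ^ B"
    using assms by simp
  finally show ?thesis .
qed

lemma not_wlp_inj:
  assumes "d \<ge> 2"
  shows "\<not> wlp_inj (monomial_ideal (gen_exponents d) :: 'a::{idom, ring_char_0} mpoly set) (2 * d - 3)"
proof -
  define n where "n = 2 * d - 3"
  define L L' :: "'a mpoly" where "L = var 0 + var 1" and "L' = - (var 2 + var 3)"
  define f where "f = (\<Sum>k<Suc n. L ^ k * L' ^ (n - k))"
  let ?I = "monomial_ideal (gen_exponents d) :: 'a mpoly set"
  have L: "bihomogeneous 1 0 L" and L': "bihomogeneous 0 1 L'"
    unfolding L_def L'_def
    by (intro bihomogeneous_add bihomogeneous_uminus bihomogeneous_var01 bihomogeneous_var23; simp)+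
  have "f \<in> S4_deg n"
    unfolding f_def
  proof (rule S4_deg_sum)
    fix k
    show "L ^ k * L' ^ (n - k) \<in> S4_deg n" if "k \<in> {..<Suc n}"
      using that bihomogeneous_S4_deg[OF bihomogeneous_mult[OF bihomogeneous_power[OF L, of k]
          bihomogeneous_power[OF L', of "n - k"]]] by simp
  qed
  moreover have "lin_form * f \<in> ?I"
  proof -
    have "lin_form * f = L ^ Suc n - L' ^ Suc n"
      using diff_power_eq_sum[of L n L'] by (simp add: f_def L_def L'_def lin_form_eq)
    moreover have "L ^ Suc n \<in> ?I" "L' ^ Suc n \<in> ?I"
      using assms bihomogeneous_power[OF L, of "Suc n"] bihomogeneous_power[OF L', of "Suc n"]
      by (auto simp: n_def intro: bihomogeneous_in_ideal)
    ultimately show ?thesis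
      by (simp add: ideal_gen_diff)
  qed
  moreover have "f \<notin> ?I"
  proof
    assume "f \<in> ?I"
    then have "coeff_sum (bidegree_weight 1 (d - 1) (d - 2)) f = 0"
      by (rule coeff_sum_bidegree_weight_ideal) (use assms in auto)
    moreover have "coeff_sum (bidegree_weight 1 (d - 1) (d - 2)) f = (2 :: 'a) ^ (d - 1) * (- 2) ^ (d - 2)"
      unfolding f_def L_def L'_def
      by (rule coeff_sum_bidegree_weight_geometric_sum) (use assms in \<open>simp add: n_def\<close>)
    ultimately show False
      by simp
  qed
  ultimately show ?thesis
    unfolding wlp_inj_def n_def by blast
qed

lemma coeff_sum_bidegree_weight_minus_one_lin_form:
  "coeff_sum (bidegree_weight (- 1) A B) (lin_form * q) = 0"
  by (simp only: lin_form_eq distrib_right[of "var 0 + var 1"] coeff_sum_add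
      coeff_sum_bidegree_weight_mult_x01 coeff_sum_bidegree_weight_mult_x23) simp

lemma not_wlp_surj:
  assumes "d \<ge> 2"
  shows "\<not> wlp_surj (monomial_ideal (gen_exponents d) :: 'a::comm_ring_1 mpoly set) (2 * d - 3)"
proof
  let ?\<Phi> = "coeff_sum (bidegree_weight (- 1 :: 'a) (d - 1) (d - 1))"
  define g :: "'a mpoly" where "g = var 0 ^ (d - 1) * var 2 ^ (d - 1)"
  assume "wlp_surj (monomial_ideal (gen_exponents d) :: 'a mpoly set) (2 * d - 3)"
  moreover have "g \<in> S4_deg (Suc (2 * d - 3))"
  proof -
    have "bihomogeneous (d - 1) (d - 1) g"
      using bihomogeneous_mult[OF bihomogeneous_power[OF bihomogeneous_var01, of 0 "d - 1"]
          bihomogeneous_power[OF bihomogeneous_var23, of 2 "d - 1"]]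
      by (simp add: g_def)
    moreover have "Suc (2 * d - 3) = (d - 1) + (d - 1)"
      using assms by simp
    ultimately show ?thesis
      by (simp only: bihomogeneous_S4_deg)
  qed
  ultimately obtain f where "g - lin_form * f \<in> monomial_ideal (gen_exponents d)"
    unfolding wlp_surj_def by blast
  then have "?\<Phi> (g - lin_form * f) = 0"
    by (rule coeff_sum_bidegree_weight_ideal) (use assms in auto)
  moreover have "?\<Phi> g = 1"
    by (simp add: g_def var_power mult_single coeff_sum_single bidegree_weight_def lookup_add lookup_single)
  ultimately show False
    by (simp add: coeff_sum_diff coeff_sum_bidegree_weight_minus_one_lin_form)
qed

theorem lemma4p6:
  fixes d :: nat
  assumes "d \<ge> 2"
  shows "fails_WLP_in_degree
           (ideal_gen {var 0 ^ d, var 1 ^ d, var 2 ^ d, var 3 ^ d,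
                       var 0 ^ (d - 1) * var 1, var 2 ^ (d - 1) * var 3}
              :: 'k::field_char_0 mpoly set)
           (2 * d - 3)"
  unfolding fails_WLP_in_degree_def generators_eq_monomials
  using not_wlp_inj[OF assms] not_wlp_surj[OF assms] by blast

end
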